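(* Let $\alpha_1,\alpha_2,\alpha_3,\epsilon_1,\epsilon_2,\epsilon_3,f_1,f_2,f_3$ be real parameters and consider the system on $\mathbb{R}^3$ \[ \frac{dq_i}{dt} = q_i\Big(f_i + \sum_{j=1}^3 \beta_{ij} q_j\Big),\qquad i=1,2,3, \qquad \beta = -\begin{bmatrix}\epsilon_1 & \alpha_1 & \alpha_1\\ \alpha_2 & \epsilon_2 & \alpha_2\\ \alpha_3 & \alpha_3 & \epsilon_3\end{bmatrix}. \] If this system has a non-constant first integral that is analytic at the origin $q=0$, then $f_1,f_2,f_3$ are linearly dependent over the non-negative integers, i.e. there exist $n_1,n_2,n_3\in\mathbb{Z}_{\ge 0}$, not all zero, with $n_1f_1+n_2f_2+n_3f_3=0$.
   Context: A first integral is a function $I(q_1,q_2,q_3)$ that is constant along all solutions of the system. This system is the three-firm Cournot oligopoly with gradient adjustment, after rescaling time by the demand slope $b$, with $f_i=\frac{\alpha_i}{b}(a-d_i)$ and $\epsilon_i=\frac{2\alpha_i}{b}(b+e_i)$, where $\alpha_i$ are adjustment speeds, $a$ the demand intercept and $d_i,e_i$ the linear and quadratic cost coefficients. *)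

theory Defs
  imports "HOL-Analysis.Analysis"
begin

definition beta :: "real^3 \<Rightarrow> real^3 \<Rightarrow> 3 \<Rightarrow> 3 \<Rightarrow> real" where
  "beta \<alpha> \<epsilon> i j = - (if i = j then \<epsilon> $ i else \<alpha> $ i)"

definition cournot_field :: "real^3 \<Rightarrow> real^3 \<Rightarrow> real^3 \<Rightarrow> real^3 \<Rightarrow> real^3" where
  "cournot_field \<alpha> \<epsilon> f q = (\<chi> i. q $ i * (f $ i + (\<Sum>j\<in>UNIV. beta \<alpha> \<epsilon> i j * q $ j)))"

definition analytic_on_ball0 :: "(real^3 \<Rightarrow> real) \<Rightarrow> real \<Rightarrow> bool" where
  "analytic_on_ball0 I r \<longleftrightarrow> (\<exists>c :: nat \<Rightarrow> nat \<Rightarrow> nat \<Rightarrow> real.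
     \<forall>q \<in> ball 0 r.
       ((\<lambda>(n1, n2, n3). c n1 n2 n3 * (q $ 1) ^ n1 * (q $ 2) ^ n2 * (q $ 3) ^ n3)
          has_sum I q) (UNIV :: (nat \<times> nat \<times> nat) set))"

definition first_integral_on :: "(real^3 \<Rightarrow> real^3) \<Rightarrow> (real^3 \<Rightarrow> real) \<Rightarrow> (real^3) set \<Rightarrow> bool" where
  "first_integral_on F I U \<longleftrightarrow>
     (\<forall>(x :: real \<Rightarrow> real^3) (T :: real set).
        is_interval T \<longrightarrow>
        (\<forall>t\<in>T. x t \<in> U \<and> (x has_vector_derivative F (x t)) (at t within T)) \<longrightarrow>
        (\<forall>s\<in>T. \<forall>t\<in>T. I (x s) = I (x t)))"

end

theory Submission
  imports Defs
begin

(* Write I = \<Sum> C_n q^n and let P be the homogeneous part of I of the lowest positive degree m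
   carrying a nonzero coefficient, so that I = C_0 + P + O(|q|^(m+1)) near 0.  Near the origin
   the system is, to first order, the linear flow q_i \<mapsto> e^(f_i t) q_i: the solution starting at
   s v stays within s^2 of s e^(f t) v on a time interval independent of s.  Since I is constant
   along it, dividing by s^m and letting s \<rightarrow> 0 shows that P is invariant under the linear flow.
   Differentiating P(e^(f t) v) at t = 0 gives \<Sum>_{|n| = m} C_n (n \<cdot> f) v^n = 0 for all v, hence
   n \<cdot> f = 0 for every n of degree m with C_n \<noteq> 0. *)

section \<open>Existence of solutions in a tube\<close>

lemma ext_cont_in_bcontfun:
  fixes g :: "real \<Rightarrow> 'a::metric_space"
  assumes "continuous_on {a..b} g"
  shows "ext_cont g a b \<in> bcontfun"
proof -
  have "bounded (g ` {a..b})"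
    using assms by (intro compact_imp_bounded compact_continuous_image) auto
  then show ?thesis
    using assms unfolding bcontfun_def ext_cont_def
    by (auto intro!: clamp_continuous_on clamp_bounded simp: cbox_interval)
qed

(* The Picard integral operator on [0, h], extended constantly outside [0, h] so that it acts
   on the complete space of bounded continuous functions on the real line. *)
definition picard_step ::
    "('a::banach \<Rightarrow> 'a) \<Rightarrow> 'a \<Rightarrow> real \<Rightarrow> (real, 'a) bcontfun \<Rightarrow> (real, 'a) bcontfun" where
  "picard_step F x0 h X = Bcontfun (ext_cont (\<lambda>t. x0 + integral {0..t} (\<lambda>u. F (X u))) 0 h)"

lemma continuous_on_compose_bcontfun:
  "continuous_on UNIV F \<Longrightarrow> continuous_on S (\<lambda>u. F (apply_bcontfun X u))"
  using continuous_on_compose2[of UNIV F S "apply_bcontfun X"] by simp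

lemma picard_step_apply:
  assumes "continuous_on UNIV F"
  shows "picard_step F x0 h X t = x0 + integral {0..clamp 0 h t} (\<lambda>u. F (X u))"
proof -
  have "continuous_on {0..h} (\<lambda>t. x0 + integral {0..t} (\<lambda>u. F (X u)))"
    using assms
    by (intro continuous_intros indefinite_integral_continuous_1 integrable_continuous_real
        continuous_on_compose_bcontfun) simp
  then have "ext_cont (\<lambda>t. x0 + integral {0..t} (\<lambda>u. F (X u))) 0 h \<in> bcontfun"
    by (rule ext_cont_in_bcontfun)
  then show ?thesis
    by (simp only: picard_step_def Bcontfun_inverse) (simp add: ext_cont_def)
qed

lemma picard_step_contraction:
  fixes F :: "'a::banach \<Rightarrow> 'a" and X Z :: "(real, 'a) bcontfun"
  assumes F_cont: "continuous_on UNIV F" and h: "0 \<le> h" and L: "0 \<le> L"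
    and lipschitz: "\<And>u. u \<in> {0..h} \<Longrightarrow> norm (F (X u) - F (Z u)) \<le> L * norm (X u - Z u)"
  shows "dist (picard_step F x0 h X) (picard_step F x0 h Z) \<le> h * L * dist X Z"
proof (rule dist_bound)
  fix t
  have c: "clamp 0 h t \<in> {0..h}"
    using clamp_in_interval[of 0 h t] h by (simp add: cbox_interval)
  have "dist (picard_step F x0 h X t) (picard_step F x0 h Z t)
      = norm (integral {0..clamp 0 h t} (\<lambda>u. F (X u) - F (Z u)))"
    using F_cont by (simp add: picard_step_apply dist_norm integral_diff integrable_continuous_real
        continuous_on_compose_bcontfun)
  also have "\<dots> \<le> (L * dist X Z) * (clamp 0 h t - 0)"
  proof (rule integral_bound)
    fix u assume "u \<in> {0..clamp 0 h t}"
    then have "norm (F (X u) - F (Z u)) \<le> L * norm (X u - Z u)"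
      using c lipschitz by auto
    also have "\<dots> \<le> L * dist X Z"
      using dist_bounded[of X u Z] L by (simp add: dist_norm mult_left_mono)
    finally show "norm (F (X u) - F (Z u)) \<le> L * dist X Z" .
  qed (use c F_cont in \<open>auto intro!: continuous_on_diff continuous_on_compose_bcontfun\<close>)
  also have "\<dots> \<le> (L * dist X Z) * h"
    using c L by (intro mult_left_mono) auto
  finally show "dist (picard_step F x0 h X t) (picard_step F x0 h Z t) \<le> h * L * dist X Z"
    by (simp add: algebra_simps)
qed

lemma closed_bcontfun_tube:
  "closed {X :: (real, 'a::real_normed_vector) bcontfun. \<forall>t\<in>T. norm (apply_bcontfun X t - y t) \<le> \<delta>}"
proof -
  have eval_cont: "continuous_on UNIV (\<lambda>X::(real, 'a) bcontfun. apply_bcontfun X t)" for t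
    unfolding continuous_on_iff using dist_bounded le_less_trans by blast
  have "{X. \<forall>t\<in>T. norm (apply_bcontfun X t - y t) \<le> \<delta>}
      = (\<Inter>t\<in>T. {X. norm (apply_bcontfun X t - y t) \<le> \<delta>})"
    by auto
  then show ?thesis
    by (simp add: closed_INT closed_Collect_le continuous_on_norm continuous_on_diff eval_cont)
qed

lemma picard_in_tube:
  fixes F :: "'a::banach \<Rightarrow> 'a" and y :: "real \<Rightarrow> 'a"
  assumes h: "0 < h" and \<delta>: "0 \<le> \<delta>" and y_cont: "continuous_on {0..h} y"
    and F_cont: "continuous_on UNIV F"
    and L: "0 \<le> L" "h * L < 1"
    and lipschitz: "\<And>a b t t'. t \<in> {0..h} \<Longrightarrow> t' \<in> {0..h} \<Longrightarrow> norm (a - y t) \<le> \<delta>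
                      \<Longrightarrow> norm (b - y t') \<le> \<delta> \<Longrightarrow> norm (F a - F b) \<le> L * norm (a - b)"
    and tube: "\<And>z t. continuous_on {0..h} z \<Longrightarrow> \<forall>u\<in>{0..h}. norm (z u - y u) \<le> \<delta> \<Longrightarrow> t \<in> {0..h}
                 \<Longrightarrow> norm (x0 + integral {0..t} (\<lambda>u. F (z u)) - y t) \<le> \<delta>"
  obtains x where "x 0 = x0"
    "\<And>t. t \<in> {0..h} \<Longrightarrow> (x has_vector_derivative F (x t)) (at t within {0..h})"
    "\<And>t. t \<in> {0..h} \<Longrightarrow> norm (x t - y t) \<le> \<delta>"
proof -
  have clamp_id: "clamp 0 h t = t" if "t \<in> {0..h}" for t
    using that by (simp add: cbox_interval)
  define S :: "(real, 'a) bcontfun set"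
    where "S = {X. \<forall>t\<in>{0..h}. norm (apply_bcontfun X t - y t) \<le> \<delta>}"
  have "complete S"
    using closed_bcontfun_tube by (simp add: S_def complete_eq_closed)
  have "Bcontfun (ext_cont y 0 h) \<in> S"
    using \<delta> y_cont by (simp add: S_def Bcontfun_inverse ext_cont_in_bcontfun cbox_interval)
  then have "S \<noteq> {}"
    by blast
  have "picard_step F x0 h ` S \<subseteq> S"
    using tube F_cont by (auto simp: S_def picard_step_apply clamp_id)
  have "dist (picard_step F x0 h X) (picard_step F x0 h Z) \<le> (h * L) * dist X Z"
    if "X \<in> S" "Z \<in> S" for X Z
    using that h L(1) by (intro picard_step_contraction F_cont lipschitz) (auto simp: S_def)
  then obtain X where "X \<in> S" and X_fix: "picard_step F x0 h X = X"
    using Banach_fix[OF \<open>complete S\<close> \<open>S \<noteq> {}\<close> _ L(2) \<open>picard_step F x0 h ` S \<subseteq> S\<close>] h L(1)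
    by auto
  have X_eq: "X t = x0 + integral {0..t} (\<lambda>u. F (X u))" if "t \<in> {0..h}" for t
    using picard_step_apply[OF F_cont, of x0 h X t] X_fix that by (simp add: clamp_id)
  show thesis
  proof
    show "X 0 = x0"
      using X_eq[of 0] h by simp
    show "norm (X t - y t) \<le> \<delta>" if "t \<in> {0..h}" for t
      using \<open>X \<in> S\<close> that by (auto simp: S_def)
    show "(X has_vector_derivative F (X t)) (at t within {0..h})" if t: "t \<in> {0..h}" for t
    proof (rule has_vector_derivative_transform[OF t])
      show "((\<lambda>t. x0 + integral {0..t} (\<lambda>u. F (X u))) has_vector_derivative F (X t))
          (at t within {0..h})"
        using integral_has_vector_derivative[OF continuous_on_compose_bcontfun[OF F_cont, of _ X] t]
        by (auto intro: derivative_eq_intros)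
    qed (use X_eq in auto)
  qed
qed

lemma integral_deviation_from_solution:
  fixes y :: "real \<Rightarrow> 'a::banach"
  assumes t: "0 \<le> t"
    and y: "\<And>u. u \<in> {0..t} \<Longrightarrow> (y has_vector_derivative y' u) (at u within {0..t})"
    and cont: "continuous_on {0..t} y'" "continuous_on {0..t} g"
    and bound: "\<And>u. u \<in> {0..t} \<Longrightarrow> norm (g u - y' u) \<le> C"
  shows "norm (y 0 + integral {0..t} g - y t) \<le> C * t"
proof -
  have "(y' has_integral (y t - y 0)) {0..t}"
    using fundamental_theorem_of_calculus[OF t] y by blast
  then have "y 0 + integral {0..t} g - y t = integral {0..t} (\<lambda>u. g u - y' u)"
    using cont by (simp add: integral_diff integrable_continuous_real integral_unique)
  also have "norm \<dots> \<le> C * (t - 0)"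
    using t bound by (intro integral_bound continuous_intros cont) auto
  finally show ?thesis
    by simp
qed

lemma solution_near_approximate_solution:
  fixes F :: "'a::banach \<Rightarrow> 'a" and y :: "real \<Rightarrow> 'a"
  assumes h: "0 < h" and \<delta>: "0 \<le> \<delta>"
    and y: "\<And>t. t \<in> {0..h} \<Longrightarrow> (y has_vector_derivative y' t) (at t within {0..h})"
    and y'_cont: "continuous_on {0..h} y'" and F_cont: "continuous_on UNIV F"
    and L: "0 \<le> L" "h * L < 1"
    and lipschitz: "\<And>a b t t'. t \<in> {0..h} \<Longrightarrow> t' \<in> {0..h} \<Longrightarrow> norm (a - y t) \<le> \<delta>
                      \<Longrightarrow> norm (b - y t') \<le> \<delta> \<Longrightarrow> norm (F a - F b) \<le> L * norm (a - b)"
    and defect: "\<And>a t. t \<in> {0..h} \<Longrightarrow> norm (a - y t) \<le> \<delta> \<Longrightarrow> norm (F a - y' t) \<le> C"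
    and C: "C * h \<le> \<delta>"
  obtains x where "x 0 = y 0"
    "\<And>t. t \<in> {0..h} \<Longrightarrow> (x has_vector_derivative F (x t)) (at t within {0..h})"
    "\<And>t. t \<in> {0..h} \<Longrightarrow> norm (x t - y t) \<le> \<delta>"
proof (rule picard_in_tube[OF h \<delta> _ F_cont L])
  show "continuous_on {0..h} y"
    using y has_vector_derivative_continuous continuous_on_eq_continuous_within by blast
  have "norm (F (y 0) - y' 0) \<le> C"
    using defect[of 0 "y 0"] h \<delta> by simp
  then have "0 \<le> C"
    by (rule order_trans[OF norm_ge_zero])
  show "norm (y 0 + integral {0..t} (\<lambda>u. F (z u)) - y t) \<le> \<delta>"
    if z: "continuous_on {0..h} z" "\<forall>u\<in>{0..h}. norm (z u - y u) \<le> \<delta>" and t: "t \<in> {0..h}" for z t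
  proof -
    have sub: "{0..t} \<subseteq> {0..h}"
      using t by auto
    have "norm (y 0 + integral {0..t} (\<lambda>u. F (z u)) - y t) \<le> C * t"
    proof (rule integral_deviation_from_solution[where y' = y'])
      show "continuous_on {0..t} (\<lambda>u. F (z u))"
        using continuous_on_compose2[OF F_cont continuous_on_subset[OF z(1) sub]] by simp
      show "(y has_vector_derivative y' u) (at u within {0..t})" if "u \<in> {0..t}" for u
        using has_vector_derivative_within_subset[OF y sub] that sub by auto
    qed (use t sub z(2) defect y'_cont in \<open>auto intro: continuous_on_subset\<close>)
    also have "\<dots> \<le> \<delta>"
      using t \<open>0 \<le> C\<close> C by (meson atLeastAtMost_iff mult_left_mono order_trans)
    finally show ?thesis .
  qed
qed (use lipschitz that in blast)+

lemma has_vector_derivative_vec_lambda: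
  fixes g :: "'n::finite \<Rightarrow> real \<Rightarrow> real"
  assumes "\<And>i. (g i has_real_derivative g' i) (at t within T)"
  shows "((\<lambda>t. \<chi> i. g i t) has_vector_derivative (\<chi> i. g' i)) (at t within T)"
proof -
  have "(\<lambda>t. \<chi> i. g i t) = (\<lambda>t. \<Sum>i\<in>UNIV. g i t *\<^sub>R axis i 1)"
    "(\<chi> i. g' i) = (\<Sum>i\<in>UNIV. g' i *\<^sub>R axis i 1)"
    by (simp_all add: fun_eq_iff vec_eq_iff axis_def if_distrib cong: if_cong)
  then show ?thesis
    using has_vector_derivative_scaleR[OF assms has_vector_derivative_const]
    by (auto intro!: has_vector_derivative_sum)
qed

lemma has_real_derivative_eq_0_if_const:
  assumes "(g has_real_derivative D) (at a within {a..b})" and "a < b"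
    and "\<And>t. t \<in> {a..b} \<Longrightarrow> g t = g a"
  shows "D = 0"
proof -
  have "(g has_real_derivative 0) (at a within {a..b})"
  proof (rule has_field_derivative_transform_within[OF DERIV_const zero_less_one])
    show "a \<in> {a..b}"
      using assms(2) by simp
    show "g a = g t" if "t \<in> {a..b}" for t
      using assms(3)[OF that] by simp
  qed
  then show ?thesis
    using has_field_derivative_unique[OF assms(1)] assms(2) by (simp add: at_within_Icc_at_right)
qed

lemma eventually_mult_less_at_right_0:
  fixes K r :: real
  assumes "0 < r"
  shows "\<forall>\<^sub>F s in at_right 0. K * s < r"
proof -
  have "((\<lambda>s. K * s) \<longlongrightarrow> 0) (at_right 0)"
    by (intro tendsto_eq_intros) auto
  then show ?thesis
    using assms by (rule order_tendstoD(2))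
qed

lemma tendsto_inverse_scaleR_of_quadratic_error:
  fixes x :: "real \<Rightarrow> 'a::real_normed_vector"
  assumes "\<forall>\<^sub>F s in at_right 0. norm (x s - s *\<^sub>R e) \<le> s\<^sup>2"
  shows "((\<lambda>s. x s /\<^sub>R s) \<longlongrightarrow> e) (at_right 0)"
proof -
  have "\<forall>\<^sub>F s in at_right 0. norm (x s /\<^sub>R s - e) \<le> s"
    using assms eventually_at_right_less[of 0]
  proof eventually_elim
    case (elim s)
    have "x s /\<^sub>R s - e = inverse s *\<^sub>R (x s - s *\<^sub>R e)"
      using elim by (simp add: algebra_simps)
    then have "norm (x s /\<^sub>R s - e) = norm (x s - s *\<^sub>R e) / s"
      using elim by (simp add: divide_inverse_commute)
    also have "\<dots> \<le> s\<^sup>2 / s"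
      using elim by (intro divide_right_mono) auto
    finally show ?case
      by (simp add: power2_eq_square)
  qed
  then have "((\<lambda>s. x s /\<^sub>R s - e) \<longlongrightarrow> 0) (at_right 0)"
    by (rule Lim_null_comparison) (rule tendsto_ident_at)
  then show ?thesis
    by (rule LIM_zero_cancel)
qed

(* By homogeneity, I (y s) - I (z s) = s^m (P (y s /\<^sub>R s) - P (z s /\<^sub>R s)) + O(s^(m+1)). *)
lemma homogeneous_part_eq_of_scaled_limits:
  fixes P I :: "'a::real_normed_vector \<Rightarrow> real"
  assumes \<rho>: "0 < \<rho>"
    and approx: "\<And>q. norm q \<le> \<rho> \<Longrightarrow> \<bar>I q - c - P q\<bar> \<le> M * norm q ^ (m + 1)"
    and hom: "\<And>s w. P (s *\<^sub>R w) = s ^ m * P w"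
    and cont: "isCont P e1" "isCont P e2"
    and y: "((\<lambda>s. y s /\<^sub>R s) \<longlongrightarrow> e1) (at_right 0)"
    and z: "((\<lambda>s. z s /\<^sub>R s) \<longlongrightarrow> e2) (at_right 0)"
    and small: "\<forall>\<^sub>F s in at_right 0. norm (y s) \<le> K * s \<and> norm (z s) \<le> K * s"
    and eq: "\<forall>\<^sub>F s in at_right 0. I (y s) = I (z s)"
  shows "P e1 = P e2"
proof -
  define M' where "M' = max M 0"
  have "\<forall>\<^sub>F s in at_right 0.
      norm (P (y s /\<^sub>R s) - P (z s /\<^sub>R s)) \<le> 2 * M' * K ^ (m + 1) * s"
    using eventually_at_right_less[of 0] eventually_mult_less_at_right_0[OF \<rho>, of K] small eq
  proof eventually_elim
    case (elim s)
    have err: "\<bar>I q - c - P q\<bar> \<le> M' * (K * s) ^ (m + 1)" if "norm q \<le> K * s" for q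
    proof -
      have "M * norm q ^ (m + 1) \<le> M' * (K * s) ^ (m + 1)"
        unfolding M'_def using that by (intro mult_mono power_mono) auto
      then show ?thesis
        using approx[of q] that elim(2) by linarith
    qed
    have "s ^ m * \<bar>P (y s /\<^sub>R s) - P (z s /\<^sub>R s)\<bar> = \<bar>P (y s) - P (z s)\<bar>"
      using elim(1) hom[of s "y s /\<^sub>R s"] hom[of s "z s /\<^sub>R s"]
      by (simp add: abs_mult flip: right_diff_distrib)
    also have "\<dots> \<le> 2 * M' * (K * s) ^ (m + 1)"
      using err[of "y s"] err[of "z s"] elim(3,4) by linarith
    also have "\<dots> = s ^ m * (2 * M' * K ^ (m + 1) * s)"
      by (simp add: power_mult_distrib)
    finally show ?case
      using elim(1) by simp
  qed
  moreover have "((\<lambda>s. 2 * M' * K ^ (m + 1) * s) \<longlongrightarrow> 0) (at_right 0)"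
    by (intro tendsto_eq_intros) auto
  ultimately have "((\<lambda>s. P (y s /\<^sub>R s) - P (z s /\<^sub>R s)) \<longlongrightarrow> 0) (at_right 0)"
    by (rule Lim_null_comparison)
  moreover have "((\<lambda>s. P (y s /\<^sub>R s) - P (z s /\<^sub>R s)) \<longlongrightarrow> P e1 - P e2) (at_right 0)"
    by (intro tendsto_diff isCont_tendsto_compose[OF cont(1) y] isCont_tendsto_compose[OF cont(2) z])
  ultimately show ?thesis
    using tendsto_unique[OF trivial_limit_at_right_real] by fastforce
qed

section \<open>The linearised flow\<close>

definition diag_mult :: "real^'n \<Rightarrow> real^'n \<Rightarrow> real^'n" where
  "diag_mult f w = (\<chi> i. f $ i * w $ i)"

definition linear_flow :: "real^'n \<Rightarrow> real \<Rightarrow> real^'n \<Rightarrow> real^'n" where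
  "linear_flow f t v = (\<chi> i. exp (f $ i * t) * v $ i)"

lemma diag_mult_scaleR: "diag_mult f (s *\<^sub>R w) = s *\<^sub>R diag_mult f w"
  by (simp add: diag_mult_def vec_eq_iff mult.left_commute)

lemma continuous_on_diag_mult [continuous_intros]:
  "continuous_on S g \<Longrightarrow> continuous_on S (\<lambda>x. diag_mult f (g x))"
  unfolding diag_mult_def by (intro continuous_intros)

lemma linear_flow_0 [simp]: "linear_flow f 0 v = v"
  by (simp add: linear_flow_def)

lemma linear_flow_has_vector_derivative:
  "((\<lambda>t. linear_flow f t v) has_vector_derivative diag_mult f (linear_flow f t v)) (at t within T)"
  unfolding linear_flow_def diag_mult_def
  by (rule has_vector_derivative_vec_lambda) (auto intro!: derivative_eq_intros)

lemma linear_flow_bounded: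
  obtains E where "0 \<le> E" "\<And>t. t \<in> {0..1} \<Longrightarrow> norm (linear_flow f t v) \<le> E"
proof -
  have "continuous_on {0..1} (\<lambda>t. linear_flow f t v)"
    unfolding linear_flow_def by (intro continuous_intros)
  then have "bounded ((\<lambda>t. linear_flow f t v) ` {0..1})"
    by (intro compact_imp_bounded compact_continuous_image) auto
  then show thesis
    using that less_imp_le unfolding bounded_pos by blast
qed

section \<open>Estimates for the Cournot vector field\<close>

lemma abs_sum_mult_component_le:
  fixes w :: "real^'n"
  shows "\<bar>\<Sum>j\<in>UNIV. b j * w $ j\<bar> \<le> (\<Sum>j\<in>UNIV. \<bar>b j\<bar>) * norm w"
proof -
  have "\<bar>\<Sum>j\<in>UNIV. b j * w $ j\<bar> \<le> (\<Sum>j\<in>UNIV. \<bar>b j\<bar> * \<bar>w $ j\<bar>)"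
    using sum_abs[of "\<lambda>j. b j * w $ j" UNIV] by (simp add: abs_mult)
  also have "\<dots> \<le> (\<Sum>j\<in>UNIV. \<bar>b j\<bar> * norm w)"
    by (intro sum_mono mult_left_mono component_le_norm_cart) auto
  finally show ?thesis
    by (simp add: sum_distrib_right)
qed

definition beta_norm :: "real^3 \<Rightarrow> real^3 \<Rightarrow> real" where
  "beta_norm \<alpha> \<epsilon> = (\<Sum>i\<in>UNIV. \<Sum>j\<in>UNIV. \<bar>beta \<alpha> \<epsilon> i j\<bar>)"

lemma beta_norm_nonneg: "0 \<le> beta_norm \<alpha> \<epsilon>"
  unfolding beta_norm_def by (intro sum_nonneg) auto

lemma cournot_field_nth:
  "cournot_field \<alpha> \<epsilon> f q $ i = q $ i * (f $ i + (\<Sum>j\<in>UNIV. beta \<alpha> \<epsilon> i j * q $ j))"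
  by (simp add: cournot_field_def)

lemma continuous_on_cournot_field: "continuous_on S (cournot_field \<alpha> \<epsilon> f)"
  unfolding cournot_field_def by (intro continuous_intros)

lemma cournot_field_component_lipschitz:
  assumes a: "norm a \<le> R" and b: "norm b \<le> R"
  shows "\<bar>(cournot_field \<alpha> \<epsilon> f a - cournot_field \<alpha> \<epsilon> f b) $ i\<bar>
           \<le> (\<bar>f $ i\<bar> + 2 * R * (\<Sum>j\<in>UNIV. \<bar>beta \<alpha> \<epsilon> i j\<bar>)) * norm (a - b)"
proof -
  let ?F = "cournot_field \<alpha> \<epsilon> f" and ?d = "norm (a - b)" and ?row = "\<Sum>j\<in>UNIV. \<bar>beta \<alpha> \<epsilon> i j\<bar>"
  define Sa where "Sa = (\<Sum>j\<in>UNIV. beta \<alpha> \<epsilon> i j * a $ j)"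
  define Sb where "Sb = (\<Sum>j\<in>UNIV. beta \<alpha> \<epsilon> i j * b $ j)"
  have R: "0 \<le> R"
    using a norm_ge_zero order_trans by blast
  have row: "0 \<le> ?row"
    by (auto intro: sum_nonneg)
  have Sab: "Sa - Sb = (\<Sum>j\<in>UNIV. beta \<alpha> \<epsilon> i j * (a - b) $ j)"
    by (simp add: Sa_def Sb_def sum_subtractf[symmetric] algebra_simps)
  have "(?F a - ?F b) $ i = f $ i * (a $ i - b $ i) + (a $ i - b $ i) * Sa + b $ i * (Sa - Sb)"
    by (simp add: cournot_field_nth Sa_def Sb_def algebra_simps)
  then have "\<bar>(?F a - ?F b) $ i\<bar>
      \<le> \<bar>f $ i\<bar> * \<bar>a $ i - b $ i\<bar> + \<bar>a $ i - b $ i\<bar> * \<bar>Sa\<bar> + \<bar>b $ i\<bar> * \<bar>Sa - Sb\<bar>"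
    unfolding abs_mult[symmetric]
    by (simp only: order_trans[OF abs_triangle_ineq add_mono[OF abs_triangle_ineq order_refl]])
  also have "\<dots> \<le> \<bar>f $ i\<bar> * ?d + ?d * (?row * R) + R * (?row * ?d)"
  proof (intro add_mono mult_mono)
    show "\<bar>Sa\<bar> \<le> ?row * R"
      unfolding Sa_def
      by (rule order_trans[OF abs_sum_mult_component_le mult_left_mono[OF a]]) (auto intro: sum_nonneg)
    show "\<bar>Sa - Sb\<bar> \<le> ?row * ?d"
      using abs_sum_mult_component_le[of "beta \<alpha> \<epsilon> i" "a - b"] by (simp add: Sab)
    show "\<bar>b $ i\<bar> \<le> R"
      using component_le_norm_cart[of b i] b by simp
  qed (use R row component_le_norm_cart[of "a - b" i] in auto)
  finally show ?thesis
    by (simp add: algebra_simps)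
qed

lemma cournot_field_lipschitz:
  assumes "norm a \<le> R" and "norm b \<le> R"
  shows "norm (cournot_field \<alpha> \<epsilon> f a - cournot_field \<alpha> \<epsilon> f b)
           \<le> ((\<Sum>i\<in>UNIV. \<bar>f $ i\<bar>) + 2 * R * beta_norm \<alpha> \<epsilon>) * norm (a - b)"
proof -
  have "norm (cournot_field \<alpha> \<epsilon> f a - cournot_field \<alpha> \<epsilon> f b)
      \<le> (\<Sum>i\<in>UNIV. (\<bar>f $ i\<bar> + 2 * R * (\<Sum>j\<in>UNIV. \<bar>beta \<alpha> \<epsilon> i j\<bar>)) * norm (a - b))"
    by (intro order_trans[OF norm_le_l1_cart] sum_mono) (rule cournot_field_component_lipschitz[OF assms])
  also have "\<dots> = ((\<Sum>i\<in>UNIV. \<bar>f $ i\<bar>) + 2 * R * beta_norm \<alpha> \<epsilon>) * norm (a - b)"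
    by (simp add: beta_norm_def sum_distrib_right sum.distrib sum_distrib_left algebra_simps)
  finally show ?thesis .
qed

lemma cournot_field_linear_approx:
  "norm (cournot_field \<alpha> \<epsilon> f a - diag_mult f a) \<le> beta_norm \<alpha> \<epsilon> * norm a ^ 2"
proof -
  have "\<bar>(cournot_field \<alpha> \<epsilon> f a - diag_mult f a) $ i\<bar>
          \<le> (\<Sum>j\<in>UNIV. \<bar>beta \<alpha> \<epsilon> i j\<bar>) * norm a ^ 2" for i
  proof -
    have "\<bar>a $ i * (\<Sum>j\<in>UNIV. beta \<alpha> \<epsilon> i j * a $ j)\<bar>
        \<le> norm a * ((\<Sum>j\<in>UNIV. \<bar>beta \<alpha> \<epsilon> i j\<bar>) * norm a)"
      unfolding abs_mult by (intro mult_mono component_le_norm_cart abs_sum_mult_component_le) auto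
    then show ?thesis
      by (simp add: cournot_field_nth diag_mult_def algebra_simps power2_eq_square)
  qed
  then have "norm (cournot_field \<alpha> \<epsilon> f a - diag_mult f a)
      \<le> (\<Sum>i\<in>UNIV. (\<Sum>j\<in>UNIV. \<bar>beta \<alpha> \<epsilon> i j\<bar>) * norm a ^ 2)"
    by (intro order_trans[OF norm_le_l1_cart] sum_mono)
  then show ?thesis
    by (simp add: beta_norm_def sum_distrib_right)
qed

lemma cournot_field_near_scaled_point:
  fixes a w :: "real^3"
  assumes w: "norm w \<le> E" and s: "0 < s" "s \<le> 1" and a: "norm (a - s *\<^sub>R w) \<le> s\<^sup>2"
  shows "norm a \<le> E + 1"
    and "norm (cournot_field \<alpha> \<epsilon> f a - diag_mult f (s *\<^sub>R w))
           \<le> s\<^sup>2 * ((\<Sum>i\<in>UNIV. \<bar>f $ i\<bar>) + 2 * (E + 1) * beta_norm \<alpha> \<epsilon> + beta_norm \<alpha> \<epsilon> * E\<^sup>2)"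
proof -
  let ?F = "cournot_field \<alpha> \<epsilon> f" and ?B = "beta_norm \<alpha> \<epsilon>"
  define Lip where "Lip = (\<Sum>i\<in>UNIV. \<bar>f $ i\<bar>) + 2 * (E + 1) * ?B"
  have E: "0 \<le> E"
    using w norm_ge_zero order_trans by blast
  then have Lip: "0 \<le> Lip"
    by (auto simp: Lip_def beta_norm_nonneg intro!: sum_nonneg)
  have sw: "norm (s *\<^sub>R w) \<le> s * E"
    using s w by (simp add: mult_left_mono)
  have sE: "s * E + s\<^sup>2 \<le> E + 1"
    using s E by (intro add_mono mult_left_le_one_le power_le_one) auto
  then show a_le: "norm a \<le> E + 1"
    using norm_triangle_sub[of a "s *\<^sub>R w"] sw a by linarith
  have "norm (s *\<^sub>R w) \<le> E + 1"
    using sw sE zero_le_power2[of s] by linarith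
  then have "norm (?F a - ?F (s *\<^sub>R w)) \<le> Lip * s\<^sup>2"
    using cournot_field_lipschitz[OF a_le, of "s *\<^sub>R w" \<alpha> \<epsilon> f] a Lip
    by (simp add: Lip_def) (meson mult_left_mono order_trans)
  moreover have "norm (?F (s *\<^sub>R w) - diag_mult f (s *\<^sub>R w)) \<le> ?B * (s * E)\<^sup>2"
    using cournot_field_linear_approx[where a = "s *\<^sub>R w"] sw beta_norm_nonneg[of \<alpha> \<epsilon>]
    by (meson mult_left_mono norm_ge_zero order_trans power_mono)
  ultimately have "norm (?F a - diag_mult f (s *\<^sub>R w)) \<le> Lip * s\<^sup>2 + ?B * (s * E)\<^sup>2"
    by (rule norm_diff_triangle_le)
  then show "norm (?F a - diag_mult f (s *\<^sub>R w)) \<le> s\<^sup>2 * ((\<Sum>i\<in>UNIV. \<bar>f $ i\<bar>) + 2 * (E + 1) * ?B + ?B * E\<^sup>2)"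
    by (simp add: Lip_def power_mult_distrib algebra_simps)
qed

lemma cournot_solution_near_linear_flow:
  fixes v :: "real^3"
  assumes E: "\<And>t. t \<in> {0..1} \<Longrightarrow> norm (linear_flow f t v) \<le> E"
    and h: "0 < h" "h \<le> 1"
    "h * ((\<Sum>i\<in>UNIV. \<bar>f $ i\<bar>) + 2 * (E + 1) * beta_norm \<alpha> \<epsilon> + beta_norm \<alpha> \<epsilon> * E\<^sup>2) \<le> 1 / 2"
    and s: "0 < s" "s \<le> 1"
  obtains x where "x 0 = s *\<^sub>R v"
    "\<And>t. t \<in> {0..h} \<Longrightarrow> (x has_vector_derivative cournot_field \<alpha> \<epsilon> f (x t)) (at t within {0..h})"
    "\<And>t. t \<in> {0..h} \<Longrightarrow> norm (x t - s *\<^sub>R linear_flow f t v) \<le> s\<^sup>2"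
proof -
  define Lip where "Lip = (\<Sum>i\<in>UNIV. \<bar>f $ i\<bar>) + 2 * (E + 1) * beta_norm \<alpha> \<epsilon>"
  define K where "K = Lip + beta_norm \<alpha> \<epsilon> * E\<^sup>2"
  define y where "y t = s *\<^sub>R linear_flow f t v" for t
  have "norm (linear_flow f 0 v) \<le> E"
    using E[of 0] by simp
  then have "0 \<le> E"
    by (rule order_trans[OF norm_ge_zero])
  then have Lip: "0 \<le> Lip" "Lip \<le> K"
    using beta_norm_nonneg[of \<alpha> \<epsilon>] by (auto simp: Lip_def K_def intro!: sum_nonneg)
  have hK: "h * K \<le> 1 / 2"
    using h(3) unfolding K_def Lip_def .
  then have "h * Lip < 1"
    using mult_left_mono[OF Lip(2), of h] h(1) by linarith
  have y_deriv: "(y has_vector_derivative diag_mult f (y t)) (at t within T)" for t T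
    unfolding y_def[abs_def] diag_mult_scaleR
    using has_vector_derivative_scaleR[OF DERIV_const linear_flow_has_vector_derivative] by simp
  then have "continuous_on T y" for T
    by (meson continuous_at_imp_continuous_on has_vector_derivative_continuous)
  then have y'_cont: "continuous_on T (\<lambda>t. diag_mult f (y t))" for T
    by (intro continuous_intros)
  have near: "norm a \<le> E + 1" "norm (cournot_field \<alpha> \<epsilon> f a - diag_mult f (y t)) \<le> s\<^sup>2 * K"
    if "t \<in> {0..h}" "norm (a - y t) \<le> s\<^sup>2" for a t
  proof -
    have w: "norm (linear_flow f t v) \<le> E"
      using E that(1) h(2) by simp
    have a: "norm (a - s *\<^sub>R linear_flow f t v) \<le> s\<^sup>2"
      using that(2) by (simp add: y_def)
    show "norm a \<le> E + 1"
      using cournot_field_near_scaled_point(1)[OF w s a] .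
    show "norm (cournot_field \<alpha> \<epsilon> f a - diag_mult f (y t)) \<le> s\<^sup>2 * K"
      using cournot_field_near_scaled_point(2)[OF w s a, of \<alpha> \<epsilon>] by (simp add: y_def K_def Lip_def)
  qed
  have "s\<^sup>2 * K * h \<le> s\<^sup>2"
    using mult_left_le[of "h * K" "s\<^sup>2"] hK by (simp add: ac_simps)
  show thesis
  proof (rule solution_near_approximate_solution[OF h(1) zero_le_power2 y_deriv y'_cont
        continuous_on_cournot_field Lip(1) \<open>h * Lip < 1\<close> _ near(2) \<open>s\<^sup>2 * K * h \<le> s\<^sup>2\<close>])
    show "norm (cournot_field \<alpha> \<epsilon> f a - cournot_field \<alpha> \<epsilon> f b) \<le> Lip * norm (a - b)"
      if "t \<in> {0..h}" "t' \<in> {0..h}" "norm (a - y t) \<le> s\<^sup>2" "norm (b - y t') \<le> s\<^sup>2" for a b t t'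
      using cournot_field_lipschitz[OF near(1) near(1), OF that(1,3) that(2,4)] by (simp add: Lip_def)
  qed (use that in \<open>auto simp: y_def\<close>)
qed

lemma cournot_solutions_near_linear_flow:
  fixes v :: "real^3"
  obtains h X where "0 < h" "h \<le> 1"
    "\<And>s. 0 < s \<Longrightarrow> s \<le> 1 \<Longrightarrow> X s 0 = s *\<^sub>R v"
    "\<And>s t. 0 < s \<Longrightarrow> s \<le> 1 \<Longrightarrow> t \<in> {0..h} \<Longrightarrow>
       (X s has_vector_derivative cournot_field \<alpha> \<epsilon> f (X s t)) (at t within {0..h})"
    "\<And>s t. 0 < s \<Longrightarrow> s \<le> 1 \<Longrightarrow> t \<in> {0..h} \<Longrightarrow> norm (X s t - s *\<^sub>R linear_flow f t v) \<le> s\<^sup>2"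
proof -
  obtain E where E: "0 \<le> E" "\<And>t. t \<in> {0..1} \<Longrightarrow> norm (linear_flow f t v) \<le> E"
    using linear_flow_bounded[of f v] by blast
  define K where "K = (\<Sum>i\<in>UNIV. \<bar>f $ i\<bar>) + 2 * (E + 1) * beta_norm \<alpha> \<epsilon> + beta_norm \<alpha> \<epsilon> * E\<^sup>2"
  define h where "h = 1 / (2 * (K + 1))"
  have "0 \<le> K"
    using E(1) beta_norm_nonneg[of \<alpha> \<epsilon>] by (auto simp: K_def intro!: sum_nonneg)
  then have h: "0 < h" "h \<le> 1" "h * K \<le> 1 / 2"
    by (auto simp: h_def field_simps)
  have "\<exists>x. x 0 = s *\<^sub>R v
      \<and> (\<forall>t\<in>{0..h}. (x has_vector_derivative cournot_field \<alpha> \<epsilon> f (x t)) (at t within {0..h})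
      \<and> norm (x t - s *\<^sub>R linear_flow f t v) \<le> s\<^sup>2)" if "0 < s" "s \<le> 1" for s
    by (rule cournot_solution_near_linear_flow[OF E(2) h[unfolded K_def] that]) auto
  then have "\<forall>s. \<exists>x. 0 < s \<longrightarrow> s \<le> 1 \<longrightarrow> x 0 = s *\<^sub>R v
      \<and> (\<forall>t\<in>{0..h}. (x has_vector_derivative cournot_field \<alpha> \<epsilon> f (x t)) (at t within {0..h})
      \<and> norm (x t - s *\<^sub>R linear_flow f t v) \<le> s\<^sup>2)"
    by blast
  then obtain X where "\<forall>s. 0 < s \<longrightarrow> s \<le> 1 \<longrightarrow> X s 0 = s *\<^sub>R v
      \<and> (\<forall>t\<in>{0..h}. (X s has_vector_derivative cournot_field \<alpha> \<epsilon> f (X s t)) (at t within {0..h})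
      \<and> norm (X s t - s *\<^sub>R linear_flow f t v) \<le> s\<^sup>2)"
    unfolding choice_iff by blast
  then show thesis
    using that[OF h(1,2)] by blast
qed

lemma first_integral_onD:
  assumes "first_integral_on F I U" and "is_interval T"
    and "\<And>t. t \<in> T \<Longrightarrow> x t \<in> U \<and> (x has_vector_derivative F (x t)) (at t within T)"
    and "s \<in> T" "t \<in> T"
  shows "I (x s) = I (x t)"
  using assms unfolding first_integral_on_def by blast

lemma first_integral_along_scaled_solutions:
  assumes fi: "first_integral_on (cournot_field \<alpha> \<epsilon> f) I (ball 0 r)" and r: "0 < r"
  obtains h K X where "0 < h"
    "\<And>t. t \<in> {0..h} \<Longrightarrow> \<forall>\<^sub>F s in at_right 0. norm (X s t - s *\<^sub>R linear_flow f t v) \<le> s\<^sup>2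
        \<and> norm (X s t) \<le> K * s \<and> I (X s t) = I (s *\<^sub>R v)"
proof -
  obtain h X where h: "0 < h" "h \<le> 1" and X0: "\<And>s. 0 < s \<Longrightarrow> s \<le> 1 \<Longrightarrow> X s 0 = s *\<^sub>R v"
    and X_deriv: "\<And>s t. 0 < s \<Longrightarrow> s \<le> 1 \<Longrightarrow> t \<in> {0..h} \<Longrightarrow>
       (X s has_vector_derivative cournot_field \<alpha> \<epsilon> f (X s t)) (at t within {0..h})"
    and X_near: "\<And>s t. 0 < s \<Longrightarrow> s \<le> 1 \<Longrightarrow> t \<in> {0..h} \<Longrightarrow>
       norm (X s t - s *\<^sub>R linear_flow f t v) \<le> s\<^sup>2"
    using cournot_solutions_near_linear_flow by blast
  obtain E where E: "0 \<le> E" "\<And>t. t \<in> {0..1} \<Longrightarrow> norm (linear_flow f t v) \<le> E"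
    using linear_flow_bounded[of f v] by blast
  have X_norm: "norm (X s t) \<le> (E + 1) * s" if s: "0 < s" "s \<le> 1" and t: "t \<in> {0..h}" for s t
  proof -
    have "norm (X s t) \<le> norm (s *\<^sub>R linear_flow f t v) + s\<^sup>2"
      using X_near[OF s t] norm_triangle_sub[of "X s t" "s *\<^sub>R linear_flow f t v"] by simp
    also have "\<dots> \<le> s * E + s * 1"
      using E(2)[of t] t h s by (intro add_mono) (auto simp: power2_eq_square mult_left_mono)
    finally show ?thesis
      by (simp add: algebra_simps)
  qed
  have X_const: "I (X s t) = I (s *\<^sub>R v)"
    if s: "0 < s" "s \<le> 1" "(E + 1) * s < r" and t: "t \<in> {0..h}" for s t
  proof -
    have "X s t' \<in> ball 0 r" if "t' \<in> {0..h}" for t'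
      using X_norm[OF s(1,2) that] s(3) by simp
    then have "I (X s t) = I (X s 0)"
      by (intro first_integral_onD[OF fi is_interval_cc]) (use X_deriv[OF s(1,2)] t h(1) in auto)
    then show ?thesis
      using X0[OF s(1,2)] by simp
  qed
  show thesis
  proof (rule that[OF h(1)])
    fix t assume t: "t \<in> {0..h}"
    show "\<forall>\<^sub>F s in at_right 0. norm (X s t - s *\<^sub>R linear_flow f t v) \<le> s\<^sup>2
        \<and> norm (X s t) \<le> (E + 1) * s \<and> I (X s t) = I (s *\<^sub>R v)"
      using eventually_at_right_less[of 0] eventually_mult_less_at_right_0[OF zero_less_one, of 1]
        eventually_mult_less_at_right_0[OF r, of "E + 1"]
      by eventually_elim (use X_near X_norm X_const t in auto)
  qed
qed

section \<open>Power series in three variables\<close>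

definition monomial3 :: "real^3 \<Rightarrow> nat \<times> nat \<times> nat \<Rightarrow> real" where
  "monomial3 q n = q $ 1 ^ fst n * q $ 2 ^ fst (snd n) * q $ 3 ^ snd (snd n)"

definition degree3 :: "nat \<times> nat \<times> nat \<Rightarrow> nat" where
  "degree3 n = fst n + fst (snd n) + snd (snd n)"

definition weighted_degree :: "real^3 \<Rightarrow> nat \<times> nat \<times> nat \<Rightarrow> real" where
  "weighted_degree f n = real (fst n) * f $ 1 + real (fst (snd n)) * f $ 2 + real (snd (snd n)) * f $ 3"

definition homogeneous_component :: "(nat \<times> nat \<times> nat \<Rightarrow> real) \<Rightarrow> nat \<Rightarrow> real^3 \<Rightarrow> real" where
  "homogeneous_component C m q = (\<Sum>n | degree3 n = m. C n * monomial3 q n)"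

lemma analytic_on_ball0_has_sum_monomial3:
  assumes "analytic_on_ball0 I r"
  obtains C where "\<And>q. q \<in> ball 0 r \<Longrightarrow> ((\<lambda>n. C n * monomial3 q n) has_sum I q) UNIV"
proof -
  obtain c where c: "\<forall>q\<in>ball 0 r.
      ((\<lambda>(n1, n2, n3). c n1 n2 n3 * (q $ 1) ^ n1 * (q $ 2) ^ n2 * (q $ 3) ^ n3) has_sum I q) UNIV"
    using assms unfolding analytic_on_ball0_def by blast
  show thesis
    by (rule that[of "\<lambda>n. c (fst n) (fst (snd n)) (snd (snd n))"])
      (use c in \<open>simp add: monomial3_def split_def mult.assoc\<close>)
qed

lemma finite_degree3_le: "finite {n. degree3 n \<le> m}"
proof (rule finite_subset)
  show "{n. degree3 n \<le> m} \<subseteq> {..m} \<times> {..m} \<times> {..m}"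
    by (auto simp: degree3_def)
qed simp

lemma finite_degree3_eq: "finite {n. degree3 n = m}"
  by (rule finite_subset[OF _ finite_degree3_le[of m]]) auto

lemma degree3_eq_0_iff: "degree3 n = 0 \<longleftrightarrow> n = (0, 0, 0)"
  by (cases n) (auto simp: degree3_def)

lemma degree3_0 [simp]: "degree3 (0, 0, 0) = 0"
  by (simp add: degree3_def)

lemma monomial3_0 [simp]: "monomial3 q (0, 0, 0) = 1"
  by (simp add: monomial3_def)

lemma monomial3_scaleR: "monomial3 (s *\<^sub>R q) n = s ^ degree3 n * monomial3 q n"
  by (simp add: monomial3_def degree3_def power_mult_distrib power_add)

lemma abs_monomial3_le: "\<bar>monomial3 q n\<bar> \<le> norm q ^ degree3 n"
proof -
  have "\<bar>monomial3 q n\<bar> = \<bar>q $ 1\<bar> ^ fst n * \<bar>q $ 2\<bar> ^ fst (snd n) * \<bar>q $ 3\<bar> ^ snd (snd n)"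
    by (simp add: monomial3_def abs_mult power_abs)
  also have "\<dots> \<le> norm q ^ fst n * norm q ^ fst (snd n) * norm q ^ snd (snd n)"
    by (intro mult_mono power_mono component_le_norm_cart) auto
  finally show ?thesis
    by (simp add: degree3_def power_add)
qed

lemma monomial3_linear_flow:
  "monomial3 (linear_flow f t v) n = exp (weighted_degree f n * t) * monomial3 v n"
  by (simp add: monomial3_def linear_flow_def weighted_degree_def power_mult_distrib
      exp_of_nat_mult[symmetric] exp_add[symmetric] algebra_simps)

lemma power_series3_abs_convergent:
  assumes "0 < \<rho>" and "((\<lambda>n. C n * monomial3 (\<chi> i. \<rho>) n) has_sum S) UNIV"
  obtains A where "((\<lambda>n. \<bar>C n\<bar> * \<rho> ^ degree3 n) has_sum A) UNIV"
proof -
  have "monomial3 (\<chi> i. \<rho>) n = \<rho> ^ degree3 n" for n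
    by (simp add: monomial3_def degree3_def power_add)
  then have "(\<lambda>n. C n * \<rho> ^ degree3 n) summable_on UNIV"
    using assms(2) by (auto simp: summable_on_def)
  then have "(\<lambda>n. \<bar>C n * \<rho> ^ degree3 n\<bar>) summable_on UNIV"
    using summable_on_iff_abs_summable_on_real[of "\<lambda>n. C n * \<rho> ^ degree3 n" UNIV] by simp
  then show thesis
    using that \<open>0 < \<rho>\<close> by (auto simp: summable_on_def abs_mult)
qed

lemma power_series3_tail_bound:
  assumes \<rho>: "0 < \<rho>" and q: "norm q \<le> \<rho>"
    and S: "((\<lambda>n. C n * monomial3 q n) has_sum S) UNIV"
    and A: "((\<lambda>n. \<bar>C n\<bar> * \<rho> ^ degree3 n) has_sum A) UNIV"
  shows "\<bar>S - (\<Sum>n | degree3 n \<le> m. C n * monomial3 q n)\<bar> \<le> A * (norm q / \<rho>) ^ (m + 1)"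
proof -
  define T where "T = (\<Sum>n | degree3 n \<le> m. C n * monomial3 q n)"
  define H where "H n = (if degree3 n \<le> m then 0 else C n * monomial3 q n)" for n
  define \<theta> where "\<theta> = (norm q / \<rho>) ^ (m + 1)"
  have "((\<lambda>n. if degree3 n \<le> m then C n * monomial3 q n else 0) has_sum T) UNIV"
    by (rule has_sum_finite_neutralI[OF finite_degree3_le]) (auto simp: T_def)
  from has_sum_add[OF S has_sum_uminusI[OF this]]
  have H_sum: "(H has_sum (S - T)) UNIV"
    by (simp add: H_def[abs_def] if_distrib cong: if_cong)
  have "\<bar>H n\<bar> \<le> \<bar>C n\<bar> * \<rho> ^ degree3 n * \<theta>" for n
  proof (cases "degree3 n \<le> m")
    case False
    have "\<bar>monomial3 q n\<bar> \<le> \<rho> ^ degree3 n * (norm q / \<rho>) ^ degree3 n"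
      using abs_monomial3_le[of q n] \<rho> by (simp add: power_divide)
    also have "\<dots> \<le> \<rho> ^ degree3 n * \<theta>"
      unfolding \<theta>_def using False q \<rho> by (intro mult_left_mono power_decreasing) auto
    finally show ?thesis
      using False by (simp add: H_def abs_mult mult_left_mono mult.assoc)
  qed (use \<rho> in \<open>simp add: H_def \<theta>_def\<close>)
  then have "S - T \<le> A * \<theta>" "- (S - T) \<le> A * \<theta>"
    using has_sum_mono[OF H_sum has_sum_cmult_left[OF A]]
      has_sum_mono[OF has_sum_uminusI[OF H_sum] has_sum_cmult_left[OF A]]
    by (auto simp: abs_le_iff)
  then show ?thesis
    by (simp add: T_def \<theta>_def abs_le_iff)
qed

lemma sum_degree3_le_lowest_order:
  assumes "0 < m" and "\<And>n. 0 < degree3 n \<Longrightarrow> degree3 n < m \<Longrightarrow> C n = 0"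
  shows "(\<Sum>n | degree3 n \<le> m. C n * monomial3 q n) = C (0, 0, 0) + homogeneous_component C m q"
proof -
  have "(\<Sum>n | degree3 n \<le> m. C n * monomial3 q n)
      = (\<Sum>n \<in> insert (0, 0, 0) {n. degree3 n = m}. C n * monomial3 q n)"
    using assms by (intro sum.mono_neutral_right finite_degree3_le)
      (auto simp: degree3_eq_0_iff[symmetric] degree3_def)
  also have "\<dots> = C (0, 0, 0) + homogeneous_component C m q"
    using assms(1) by (simp add: homogeneous_component_def finite_degree3_eq)
  finally show ?thesis .
qed

lemma power_series3_nonconstant_coeff:
  assumes I: "\<And>q. q \<in> ball 0 r \<Longrightarrow> ((\<lambda>n. C n * monomial3 q n) has_sum I q) UNIV"
    and nonconst: "\<not> (\<exists>k. \<forall>q\<in>ball 0 r. I q = k)"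
  shows "\<exists>k. 0 < k \<and> (\<exists>n. degree3 n = k \<and> C n \<noteq> 0)"
proof (rule ccontr)
  assume "\<not> ?thesis"
  then have "C n = 0" if "n \<noteq> (0, 0, 0)" for n
    using that by (metis degree3_eq_0_iff gr0I)
  then have "((\<lambda>n. C n * monomial3 q n) has_sum C (0, 0, 0)) UNIV" for q
    by (intro has_sum_finite_neutralI[of "{(0, 0, 0)}"]) auto
  then show False
    using nonconst I has_sum_unique by blast
qed

lemma power_series3_lowest_order:
  fixes C :: "nat \<times> nat \<times> nat \<Rightarrow> real"
  assumes r: "0 < r"
    and I: "\<And>q. q \<in> ball 0 r \<Longrightarrow> ((\<lambda>n. C n * monomial3 q n) has_sum I q) UNIV"
    and nonconst: "\<not> (\<exists>k. \<forall>q\<in>ball 0 r. I q = k)"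
  obtains m \<rho> M where "0 < m" "0 < \<rho>" "\<exists>n. degree3 n = m \<and> C n \<noteq> 0"
    "\<And>q. norm q \<le> \<rho> \<Longrightarrow> \<bar>I q - C (0, 0, 0) - homogeneous_component C m q\<bar> \<le> M * norm q ^ (m + 1)"
proof -
  note nonconst_coeff = power_series3_nonconstant_coeff[OF I nonconst]
  define m where "m = (LEAST k. 0 < k \<and> (\<exists>n. degree3 n = k \<and> C n \<noteq> 0))"
  have m: "0 < m" "\<exists>n. degree3 n = m \<and> C n \<noteq> 0"
    using LeastI_ex[OF nonconst_coeff] unfolding m_def by blast+
  have lower: "C n = 0" if "0 < degree3 n" "degree3 n < m" for n
    using not_less_Least[of "degree3 n"] that unfolding m_def by blast
  (* (\<rho>, \<rho>, \<rho>) lies in the ball, so the coefficients are absolutely summable at radius \<rho>. *)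
  define \<rho> where "\<rho> = r / 4"
  have \<rho>: "0 < \<rho>"
    using r by (simp add: \<rho>_def)
  have "norm (\<chi> i::3. \<rho>) \<le> 3 * \<rho>"
    using norm_le_l1_cart[of "\<chi> i::3. \<rho>"] \<rho> by (simp add: sum_3)
  moreover have "3 * \<rho> < r"
    using r by (simp add: \<rho>_def)
  ultimately have "(\<chi> i::3. \<rho>) \<in> ball 0 r"
    by simp
  then obtain A where A: "((\<lambda>n. \<bar>C n\<bar> * \<rho> ^ degree3 n) has_sum A) UNIV"
    using power_series3_abs_convergent[OF \<rho> I] by blast
  show thesis
  proof (rule that[OF m(1) \<rho> m(2)])
    fix q :: "real^3" assume q: "norm q \<le> \<rho>"
    then have "q \<in> ball 0 r"
      using r by (simp add: \<rho>_def)
    from power_series3_tail_bound[OF \<rho> q I[OF this] A, of m]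
    show "\<bar>I q - C (0, 0, 0) - homogeneous_component C m q\<bar> \<le> A / \<rho> ^ (m + 1) * norm q ^ (m + 1)"
      by (simp add: sum_degree3_le_lowest_order[OF m(1) lower] power_divide algebra_simps)
  qed
qed

lemma homogeneous_component_scaleR:
  "homogeneous_component C m (s *\<^sub>R w) = s ^ m * homogeneous_component C m w"
  by (simp add: homogeneous_component_def monomial3_scaleR sum_distrib_left mult_ac)

lemma isCont_homogeneous_component: "isCont (homogeneous_component C m) q"
proof -
  have "continuous_on UNIV (homogeneous_component C m)"
    unfolding homogeneous_component_def[abs_def] monomial3_def by (intro continuous_intros)
  then show ?thesis
    by (simp add: continuous_on_eq_continuous_at)
qed

lemma homogeneous_component_linear_flow_has_derivative:
  "((\<lambda>t. homogeneous_component C m (linear_flow f t v)) has_real_derivative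
      (\<Sum>n | degree3 n = m. C n * weighted_degree f n * monomial3 v n)) (at 0 within T)"
  unfolding homogeneous_component_def monomial3_linear_flow
  by (auto intro!: derivative_eq_intros sum.cong)

lemma sum_box_monomial3_eq_0_imp_coeff:
  assumes zero: "\<And>v. (\<Sum>n\<in>{..m} \<times> {..m} \<times> {..m}. b n * monomial3 v n) = 0"
    and i: "i \<le> m" and j: "j \<le> m" and k: "k \<le> m"
  shows "b (i, j, k) = 0"
proof -
  have nested: "(\<Sum>i\<le>m. (\<Sum>j\<le>m. (\<Sum>k\<le>m. b (i, j, k) * z ^ k) * y ^ j) * x ^ i) = 0" for x y z
  proof -
    have "(\<Sum>n\<in>{..m} \<times> {..m} \<times> {..m}. b n * monomial3 (vector [x, y, z]) n)
        = (\<Sum>i\<le>m. \<Sum>j\<le>m. \<Sum>k\<le>m. b (i, j, k) * z ^ k * y ^ j * x ^ i)"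
      by (simp add: sum.cartesian_product monomial3_def split_def mult_ac)
    then show ?thesis
      using zero by (simp only: sum_distrib_right)
  qed
  have "(\<Sum>j\<le>m. (\<Sum>k\<le>m. b (i, j, k) * z ^ k) * y ^ j) = 0" for y z
    using polyfun_eq_0[of "\<lambda>i. \<Sum>j\<le>m. (\<Sum>k\<le>m. b (i, j, k) * z ^ k) * y ^ j" m] nested i
    by blast
  then have "(\<Sum>k\<le>m. b (i, j, k) * z ^ k) = 0" for z
    using polyfun_eq_0[of "\<lambda>j. \<Sum>k\<le>m. b (i, j, k) * z ^ k" m] j by blast
  then show ?thesis
    using polyfun_eq_0[of "\<lambda>k. b (i, j, k)" m] k by blast
qed

lemma homogeneous_sum_eq_0_imp_coeff:
  assumes zero: "\<And>v. (\<Sum>n | degree3 n = m. b n * monomial3 v n) = 0" and n: "degree3 n = m"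
  shows "b n = 0"
proof -
  define B where "B = {..m} \<times> {..m} \<times> {..m}"
  have filter: "{n \<in> B. degree3 n = m} = {n. degree3 n = m}"
    by (auto simp: B_def degree3_def)
  have box_zero: "(\<Sum>n\<in>B. (if degree3 n = m then b n else 0) * monomial3 v n) = 0" for v
  proof -
    have "(\<Sum>n\<in>B. (if degree3 n = m then b n else 0) * monomial3 v n)
        = (\<Sum>n\<in>B. if degree3 n = m then b n * monomial3 v n else 0)"
      by (rule sum.cong) auto
    also have "\<dots> = (\<Sum>n | degree3 n = m. b n * monomial3 v n)"
      by (simp add: sum.inter_filter[symmetric] B_def filter[unfolded B_def])
    finally show ?thesis
      using zero by simp
  qed
  obtain i j k where ijk: "n = (i, j, k)" "i \<le> m" "j \<le> m" "k \<le> m"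
    using n by (cases n) (auto simp: degree3_def)
  have "(if degree3 (i, j, k) = m then b (i, j, k) else 0) = 0"
    using sum_box_monomial3_eq_0_imp_coeff[OF box_zero[unfolded B_def] ijk(2-4)] .
  then show ?thesis
    using ijk(1) n by simp
qed

section \<open>Resonance of the lowest-order part of a first integral\<close>

lemma first_integral_lowest_order_invariant:
  fixes I :: "real^3 \<Rightarrow> real"
  assumes fi: "first_integral_on (cournot_field \<alpha> \<epsilon> f) I (ball 0 r)" and r: "0 < r"
    and \<rho>: "0 < \<rho>"
    and approx: "\<And>q. norm q \<le> \<rho> \<Longrightarrow> \<bar>I q - c - homogeneous_component C m q\<bar> \<le> M * norm q ^ (m + 1)"
  obtains h where "0 < h"
    "\<And>t. t \<in> {0..h} \<Longrightarrow> homogeneous_component C m (linear_flow f t v) = homogeneous_component C m v"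
proof -
  obtain h K X where "0 < h" and X: "\<And>t. t \<in> {0..h} \<Longrightarrow> \<forall>\<^sub>F s in at_right 0.
      norm (X s t - s *\<^sub>R linear_flow f t v) \<le> s\<^sup>2 \<and> norm (X s t) \<le> K * s \<and> I (X s t) = I (s *\<^sub>R v)"
    using first_integral_along_scaled_solutions[OF fi r] by blast
  show thesis
  proof (rule that[OF \<open>0 < h\<close>])
    fix t assume t: "t \<in> {0..h}"
    show "homogeneous_component C m (linear_flow f t v) = homogeneous_component C m v"
    proof (rule homogeneous_part_eq_of_scaled_limits[OF \<rho> approx homogeneous_component_scaleR
          isCont_homogeneous_component isCont_homogeneous_component,
          where y = "\<lambda>s. X s t" and z = "\<lambda>s. s *\<^sub>R v" and K = "K + norm v"])
      show "((\<lambda>s. X s t /\<^sub>R s) \<longlongrightarrow> linear_flow f t v) (at_right 0)"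
        using X[OF t] by (intro tendsto_inverse_scaleR_of_quadratic_error) (auto elim: eventually_mono)
      show "((\<lambda>s. (s *\<^sub>R v) /\<^sub>R s) \<longlongrightarrow> v) (at_right 0)"
        by (rule tendsto_eventually) (use eventually_at_right_less[of 0] in \<open>auto elim: eventually_mono\<close>)
      show "\<forall>\<^sub>F s in at_right 0. norm (X s t) \<le> (K + norm v) * s \<and> norm (s *\<^sub>R v) \<le> (K + norm v) * s"
        using X[OF t] eventually_at_right_less[of 0]
      proof eventually_elim
        case (elim s)
        then have "norm (X s t) \<le> K * s" "norm (s *\<^sub>R v) = norm v * s"
          by (simp_all add: mult.commute)
        moreover have "0 \<le> K * s" "0 \<le> norm v * s"
          using order_trans[OF norm_ge_zero] calculation(1) elim by auto
        ultimately show ?case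
          unfolding distrib_right by linarith
      qed
      show "\<forall>\<^sub>F s in at_right 0. I (X s t) = I (s *\<^sub>R v)"
        using X[OF t] by (auto elim: eventually_mono)
    qed
  qed
qed

lemma lowest_order_coeff_resonant:
  fixes I :: "real^3 \<Rightarrow> real"
  assumes fi: "first_integral_on (cournot_field \<alpha> \<epsilon> f) I (ball 0 r)" and r: "0 < r"
    and \<rho>: "0 < \<rho>"
    and approx: "\<And>q. norm q \<le> \<rho> \<Longrightarrow> \<bar>I q - c - homogeneous_component C m q\<bar> \<le> M * norm q ^ (m + 1)"
    and n: "degree3 n = m"
  shows "C n * weighted_degree f n = 0"
proof (rule homogeneous_sum_eq_0_imp_coeff[OF _ n])
  fix v
  obtain h where "0 < h"
    "\<And>t. t \<in> {0..h} \<Longrightarrow> homogeneous_component C m (linear_flow f t v) = homogeneous_component C m v"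
    using first_integral_lowest_order_invariant[OF fi r \<rho> approx] by blast
  then show "(\<Sum>n | degree3 n = m. C n * weighted_degree f n * monomial3 v n) = 0"
    using has_real_derivative_eq_0_if_const[OF homogeneous_component_linear_flow_has_derivative]
    by simp
qed

theorem theorem2:
  fixes \<alpha> \<epsilon> f :: "real^3"
  assumes "\<exists>(I :: real^3 \<Rightarrow> real) r. r > 0 \<and> analytic_on_ball0 I r
             \<and> first_integral_on (cournot_field \<alpha> \<epsilon> f) I (ball 0 r)
             \<and> \<not> (\<exists>k. \<forall>q\<in>ball 0 r. I q = k)"
  shows "\<exists>n1 n2 n3 :: nat. (n1, n2, n3) \<noteq> (0, 0, 0) \<and>
           real n1 * f $ 1 + real n2 * f $ 2 + real n3 * f $ 3 = 0"
proof -
  obtain I r where r: "r > 0" and an: "analytic_on_ball0 I r"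
    and fi: "first_integral_on (cournot_field \<alpha> \<epsilon> f) I (ball 0 r)"
    and nonconst: "\<not> (\<exists>k. \<forall>q\<in>ball 0 r. I q = k)"
    using assms by blast
  obtain C where series: "\<And>q. q \<in> ball 0 r \<Longrightarrow> ((\<lambda>n. C n * monomial3 q n) has_sum I q) UNIV"
    using analytic_on_ball0_has_sum_monomial3[OF an] by blast
  obtain m \<rho> M where m: "0 < m" and \<rho>: "0 < \<rho>" and "\<exists>n. degree3 n = m \<and> C n \<noteq> 0"
    and approx: "\<And>q. norm q \<le> \<rho> \<Longrightarrow> \<bar>I q - C (0, 0, 0) - homogeneous_component C m q\<bar> \<le> M * norm q ^ (m + 1)"
    using power_series3_lowest_order[OF r series nonconst] by blast
  then obtain n where n: "degree3 n = m" "C n \<noteq> 0"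
    by blast
  have "weighted_degree f n = 0"
    using lowest_order_coeff_resonant[OF fi r \<rho> approx n(1)] n(2) by simp
  then show ?thesis
    using n m by (cases n) (auto simp: weighted_degree_def degree3_def)
qed

end
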